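(* Let $\sigma\in S_k$ be a $213$-avoiding permutation, i.e. there are no $1\le i_1<i_2<i_3\le k$ with $\sigma(i_2)<\sigma(i_1)<\sigma(i_3)$. Then there exists a strongly regular bi-sequence $\mathcal A$ of length $k$ such that $\sigma=\sigma_0(\mathcal A)$.
   Context: A bi-sequence of length $k$ is a pair $\mathcal A=\begin{pmatrix}a_1&\cdots&a_k\\ b_1&\cdots&b_k\end{pmatrix}$ of integer sequences with $a_1\le\cdots\le a_k$, $b_1\ge\cdots\ge b_k$, and $a_i\le b_{k+1-i}+1$ for all $i$. It is regular if the $a_i$ are pairwise distinct and the $b_i$ are pairwise distinct; it is strongly regular if it is regular and $\{a_1,\dots,a_k\}\cap\{b_1+1,\dots,b_k+1\}=\emptyset$. The permutation $\sigma_0(\mathcal A)\in S_k$ is defined recursively for $i=k,k-1,\dots,1$ by $\sigma_0^{-1}(i)=\max\{j\notin\sigma_0^{-1}(\{i+1,\dots,k\}) : a_j\le b_i+1\}$. *)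

theory Defs
  imports "HOL-Combinatorics.Permutations"
begin

text \<open>Sequences of length k are functions nat => int, indexed by 1..k.\<close>

definition bi_sequence :: "nat \<Rightarrow> (nat \<Rightarrow> int) \<Rightarrow> (nat \<Rightarrow> int) \<Rightarrow> bool" where
  "bi_sequence k a b \<longleftrightarrow>
     (\<forall>i j. 1 \<le> i \<and> i \<le> j \<and> j \<le> k \<longrightarrow> a i \<le> a j) \<and>
     (\<forall>i j. 1 \<le> i \<and> i \<le> j \<and> j \<le> k \<longrightarrow> b i \<ge> b j) \<and>
     (\<forall>i\<in>{1..k}. a i \<le> b (k + 1 - i) + 1)"

definition regular_bi_sequence :: "nat \<Rightarrow> (nat \<Rightarrow> int) \<Rightarrow> (nat \<Rightarrow> int) \<Rightarrow> bool" where
  "regular_bi_sequence k a b \<longleftrightarrow>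
     bi_sequence k a b \<and> inj_on a {1..k} \<and> inj_on b {1..k}"

definition strongly_regular_bi_sequence :: "nat \<Rightarrow> (nat \<Rightarrow> int) \<Rightarrow> (nat \<Rightarrow> int) \<Rightarrow> bool" where
  "strongly_regular_bi_sequence k a b \<longleftrightarrow>
     regular_bi_sequence k a b \<and> a ` {1..k} \<inter> (\<lambda>i. b i + 1) ` {1..k} = {}"

text \<open>sig0_inv_list k a b n = [sigma0^-1(k), sigma0^-1(k-1), ..., sigma0^-1(k-n+1)]\<close>
primrec sig0_inv_list :: "nat \<Rightarrow> (nat \<Rightarrow> int) \<Rightarrow> (nat \<Rightarrow> int) \<Rightarrow> nat \<Rightarrow> nat list" where
  "sig0_inv_list k a b 0 = []"
| "sig0_inv_list k a b (Suc n) =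
     (let used = sig0_inv_list k a b n
      in used @ [Max {j \<in> {1..k}. j \<notin> set used \<and> a j \<le> b (k - n) + 1}])"

definition sig0_inv :: "nat \<Rightarrow> (nat \<Rightarrow> int) \<Rightarrow> (nat \<Rightarrow> int) \<Rightarrow> nat \<Rightarrow> nat" where
  "sig0_inv k a b i = sig0_inv_list k a b k ! (k - i)"

definition sigma0 :: "nat \<Rightarrow> (nat \<Rightarrow> int) \<Rightarrow> (nat \<Rightarrow> int) \<Rightarrow> nat \<Rightarrow> nat" where
  "sigma0 k a b j = (if j \<in> {1..k} then (THE i. i \<in> {1..k} \<and> sig0_inv k a b i = j) else j)"

definition avoids_213 :: "nat \<Rightarrow> (nat \<Rightarrow> nat) \<Rightarrow> bool" where
  "avoids_213 k \<sigma> \<longleftrightarrow>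
     \<not> (\<exists>i1 i2 i3. 1 \<le> i1 \<and> i1 < i2 \<and> i2 < i3 \<and> i3 \<le> k \<and>
            \<sigma> i2 < \<sigma> i1 \<and> \<sigma> i1 < \<sigma> i3)"

end

theory Submission
  imports Defs
begin

text \<open>Put \<open>P = \<sigma>\<inverse>\<close> and let \<open>N i = max P{i..k}\<close> be the suffix maxima of \<open>P\<close>.
  Choose \<open>a\<^sub>j = M j\<close> and \<open>b\<^sub>i = M N(i) + (k - i) + 1\<close> with \<open>M = k + 2\<close>: then
  \<open>a\<^sub>j \<le> b\<^sub>i + 1\<close> holds exactly when \<open>j \<le> N(i)\<close>, the \<open>b\<^sub>i\<close> strictly decrease and \<open>a\<^sub>j \<noteq> b\<^sub>i + 1\<close>,
  so the bi-sequence is strongly regular. In step \<open>i\<close> the recursion for \<open>\<sigma>\<^sub>0\<inverse>\<close> picks the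
  largest position \<open>j \<le> N(i)\<close> not among \<open>P(i+1), \<dots>, P(k)\<close>. This is \<open>P(i)\<close>: a larger
  such \<open>j\<close> would lie strictly between \<open>P(i)\<close> and the position \<open>P(q) = N(i)\<close>, \<open>q > i\<close>, and
  carry a value \<open>\<sigma>(j) < i\<close>, so \<open>P(i), j, P(q)\<close> would be an occurrence of \<open>213\<close>.\<close>

lemma card_le_Max_of_positive:
  fixes S :: "nat set"
  assumes "finite S" "S \<noteq> {}" "\<forall>x\<in>S. 1 \<le> x"
  shows "card S \<le> Max S"
proof -
  have "S \<subseteq> {1..Max S}" using assms by auto
  then have "card S \<le> card {1..Max S}" by (intro card_mono) auto
  then show ?thesis by simp
qed

lemma mult_le_mult_add_iff:
  fixes M j n c :: int
  assumes "0 \<le> c" "c < M"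
  shows "M * j \<le> M * n + c \<longleftrightarrow> j \<le> n"
proof
  assume le: "M * j \<le> M * n + c"
  show "j \<le> n"
  proof (rule ccontr)
    assume "\<not> j \<le> n"
    then have "M * (n + 1) \<le> M * j" using assms by (intro mult_left_mono) auto
    then show False using le assms by (simp add: algebra_simps)
  qed
next
  assume "j \<le> n"
  then show "M * j \<le> M * n + c" using assms by (simp add: mult_left_mono add_increasing2)
qed

lemma mult_ne_mult_add:
  fixes M j n c :: int
  assumes "0 < c" "c < M"
  shows "M * j \<noteq> M * n + c"
proof
  assume "M * j = M * n + c"
  then have "M dvd c" by (metis add_diff_cancel_left' dvd_diff dvd_triv_left)
  then show False using assms zdvd_not_zless by blast
qed

lemma image_suffix_eq_set_map:
  assumes "n \<le> k"
  shows "set (map (\<lambda>t. P (k - t)) [0..<n]) = P ` {k - n + 1..k}"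
proof -
  have "(\<lambda>t. k - t) ` {0..<n} = {k - n + 1..k}"
  proof
    show "{k - n + 1..k} \<subseteq> (\<lambda>t. k - t) ` {0..<n}"
    proof
      fix x assume "x \<in> {k - n + 1..k}"
      then show "x \<in> (\<lambda>t. k - t) ` {0..<n}"
        using assms by (intro image_eqI[of _ _ "k - x"]) auto
    qed
  qed (use assms in auto)
  moreover have "set (map (\<lambda>t. P (k - t)) [0..<n]) = P ` (\<lambda>t. k - t) ` {0..<n}"
    by (simp add: image_image)
  ultimately show ?thesis by simp
qed

context
  fixes k :: nat and a b :: "nat \<Rightarrow> int" and \<sigma> :: "nat \<Rightarrow> nat"
  assumes perm: "\<sigma> permutes {1..k}"
    and greedy: "\<And>i. i \<in> {1..k} \<Longrightarrow>
      Max {j \<in> {1..k}. j \<notin> inv \<sigma> ` {i + 1..k} \<and> a j \<le> b i + 1} = inv \<sigma> i"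
begin

lemma sig0_inv_list_eq_greedy:
  "n \<le> k \<Longrightarrow> sig0_inv_list k a b n = map (\<lambda>t. inv \<sigma> (k - t)) [0..<n]"
proof (induction n)
  case 0
  then show ?case by simp
next
  case (Suc n)
  have "k - n \<in> {1..k}" using Suc.prems by auto
  with Suc greedy[of "k - n"] image_suffix_eq_set_map[of n k "inv \<sigma>"] show ?case
    by (simp add: Let_def)
qed

lemma sig0_inv_eq_inv: "i \<in> {1..k} \<Longrightarrow> sig0_inv k a b i = inv \<sigma> i"
  using sig0_inv_list_eq_greedy[of k] unfolding sig0_inv_def by (simp add: nth_map)

lemma sigma0_eq_greedy: "sigma0 k a b = \<sigma>"
proof
  fix j
  show "sigma0 k a b j = \<sigma> j"
  proof (cases "j \<in> {1..k}")
    case True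
    have "(THE i. i \<in> {1..k} \<and> sig0_inv k a b i = j) = \<sigma> j"
    proof (rule the_equality)
      have "\<sigma> j \<in> {1..k}" using True permutes_in_image[OF perm] by blast
      then show "\<sigma> j \<in> {1..k} \<and> sig0_inv k a b (\<sigma> j) = j"
        using perm sig0_inv_eq_inv by (simp add: permutes_inverses(2))
    next
      fix i assume "i \<in> {1..k} \<and> sig0_inv k a b i = j"
      then show "i = \<sigma> j" using perm sig0_inv_eq_inv by (metis permutes_inverses(1))
    qed
    then show ?thesis using True unfolding sigma0_def by simp
  next
    case False
    then show ?thesis
      unfolding sigma0_def if_not_P[OF False] using permutes_not_in[OF perm False] by simp
  qed
qed

end

definition suffix_max :: "(nat \<Rightarrow> nat) \<Rightarrow> nat \<Rightarrow> nat \<Rightarrow> nat" where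
  "suffix_max P k i = Max (P ` {i..k})"

lemma suffix_max_ge: "i \<le> q \<Longrightarrow> q \<le> k \<Longrightarrow> P q \<le> suffix_max P k i"
  unfolding suffix_max_def by (intro Max_ge) auto

lemma suffix_max_attained: "i \<le> k \<Longrightarrow> \<exists>q\<in>{i..k}. suffix_max P k i = P q"
proof -
  assume "i \<le> k"
  then have "suffix_max P k i \<in> P ` {i..k}" unfolding suffix_max_def by (intro Max_in) auto
  then show ?thesis by auto
qed

lemma suffix_max_antimono: "i \<le> j \<Longrightarrow> j \<le> k \<Longrightarrow> suffix_max P k j \<le> suffix_max P k i"
  unfolding suffix_max_def by (intro Max_mono) auto

lemma le_suffix_max_complement:
  assumes "P permutes {1..k}" "i \<in> {1..k}"
  shows "i \<le> suffix_max P k (k + 1 - i)"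
proof -
  have "card (P ` {k + 1 - i..k}) = card {k + 1 - i..k}"
    using assms(1) by (intro card_image inj_on_subset[OF permutes_inj_on]) auto
  also have "\<dots> = i" using assms(2) by auto
  finally have "card (P ` {k + 1 - i..k}) = i" .
  moreover have "\<forall>x\<in>P ` {k + 1 - i..k}. 1 \<le> x"
    using assms permutes_in_image[OF assms(1)] by fastforce
  ultimately have "i \<le> Max (P ` {k + 1 - i..k})"
    using assms(2) card_le_Max_of_positive[of "P ` {k + 1 - i..k}"] by auto
  then show ?thesis unfolding suffix_max_def .
qed

lemma greedy_choice_avoiding_213:
  assumes perm: "\<sigma> permutes {1..k}" and avoids: "avoids_213 k \<sigma>" and i: "i \<in> {1..k}"
  shows "Max {j \<in> {1..k}. j \<notin> inv \<sigma> ` {i + 1..k} \<and> j \<le> suffix_max (inv \<sigma>) k i} = inv \<sigma> i"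
    (is "Max ?C = _")
proof (rule Max_eqI)
  let ?P = "inv \<sigma>"
  have P_perm: "?P permutes {1..k}" using perm by (rule permutes_inv)
  have \<sigma>_P: "\<sigma> (?P x) = x" and P_\<sigma>: "?P (\<sigma> x) = x" for x
    using permutes_inverses[OF perm] by auto
  have P_in: "?P x \<in> {1..k}" and \<sigma>_in: "\<sigma> x \<in> {1..k}" if "x \<in> {1..k}" for x
    using that permutes_in_image[OF P_perm] permutes_in_image[OF perm] by blast+
  show "finite ?C" by auto
  have "?P i \<notin> ?P ` {i + 1..k}"
  proof
    assume "?P i \<in> ?P ` {i + 1..k}"
    then obtain x where "x \<in> {i + 1..k}" "?P i = ?P x" by blast
    then show False using \<sigma>_P[of i] \<sigma>_P[of x] by simp
  qed
  then show "?P i \<in> ?C"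
    using P_in[OF i] suffix_max_ge[of i i k ?P] i by auto
  fix j assume "j \<in> ?C"
  then have j: "j \<in> {1..k}" "j \<notin> ?P ` {i + 1..k}" "j \<le> suffix_max ?P k i" by auto
  show "j \<le> ?P i"
  proof (rule ccontr)
    assume "\<not> j \<le> ?P i"
    then have Pi_less: "?P i < j" by simp
    obtain q where q: "q \<in> {i..k}" "suffix_max ?P k i = ?P q"
      using suffix_max_attained[of i k ?P] i by auto
    have "q \<noteq> i" using q j Pi_less by auto
    with q have q_gt: "i < q" by auto
    then have "j \<noteq> ?P q" using q j(2) by auto
    with q j have j_less: "j < ?P q" by auto
    have "\<sigma> j \<notin> {i + 1..k}" using j(2) rev_image_eqI[of "\<sigma> j" _ j ?P] P_\<sigma>[of j] by auto
    moreover have "\<sigma> j \<noteq> i" using Pi_less P_\<sigma>[of j] by auto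
    ultimately have "\<sigma> j < i" using \<sigma>_in[OF j(1)] by auto
    moreover have "1 \<le> ?P i" "?P q \<le> k" using P_in i q by auto
    ultimately have "1 \<le> ?P i \<and> ?P i < j \<and> j < ?P q \<and> ?P q \<le> k \<and>
        \<sigma> j < \<sigma> (?P i) \<and> \<sigma> (?P i) < \<sigma> (?P q)"
      using Pi_less j_less q_gt \<sigma>_P by auto
    then show False using avoids unfolding avoids_213_def by blast
  qed
qed

definition witness_top :: "nat \<Rightarrow> nat \<Rightarrow> int" where
  "witness_top k j = int (k + 2) * int j"

definition witness_bottom :: "(nat \<Rightarrow> nat) \<Rightarrow> nat \<Rightarrow> nat \<Rightarrow> int" where
  "witness_bottom P k i = int (k + 2) * int (suffix_max P k i) + int (k - i) + 1"

lemma witness_top_le_bottom_iff: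
  "i \<in> {1..k} \<Longrightarrow> witness_top k j \<le> witness_bottom P k i + 1 \<longleftrightarrow> j \<le> suffix_max P k i"
  unfolding witness_top_def witness_bottom_def
  using mult_le_mult_add_iff[of "int (k - i) + 2" "int (k + 2)" "int j" "int (suffix_max P k i)"]
  by (simp add: add.assoc)

lemma witness_top_ne_bottom:
  "i \<in> {1..k} \<Longrightarrow> witness_top k j \<noteq> witness_bottom P k i + 1"
  unfolding witness_top_def witness_bottom_def
  using mult_ne_mult_add[of "int (k - i) + 2" "int (k + 2)" "int j" "int (suffix_max P k i)"]
  by (simp add: add.assoc)

lemma witness_bottom_strict_decreasing:
  assumes "i < j" "j \<le> k"
  shows "witness_bottom P k j < witness_bottom P k i"
proof -
  have "int (k + 2) * int (suffix_max P k j) \<le> int (k + 2) * int (suffix_max P k i)"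
    using suffix_max_antimono[of i j k P] assms by (intro mult_left_mono) auto
  then show ?thesis using assms unfolding witness_bottom_def by linarith
qed

lemma strongly_regular_witness:
  assumes "P permutes {1..k}"
  shows "strongly_regular_bi_sequence k (witness_top k) (witness_bottom P k)"
  unfolding strongly_regular_bi_sequence_def regular_bi_sequence_def bi_sequence_def
proof (intro conjI allI impI ballI)
  fix i j assume ij: "1 \<le> i \<and> i \<le> j \<and> j \<le> k"
  then show "witness_top k i \<le> witness_top k j"
    unfolding witness_top_def by (intro mult_left_mono) auto
  show "witness_bottom P k j \<le> witness_bottom P k i"
    using ij witness_bottom_strict_decreasing[of i j k P] by (cases "i = j") auto
next
  fix i assume "i \<in> {1..k}"
  moreover have "k + 1 - i \<in> {1..k}" using \<open>i \<in> {1..k}\<close> by auto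
  ultimately show "witness_top k i \<le> witness_bottom P k (k + 1 - i) + 1"
    using witness_top_le_bottom_iff le_suffix_max_complement[OF assms] by blast
next
  show "inj_on (witness_top k) {1..k}" by (auto simp: inj_on_def witness_top_def)
  show "inj_on (witness_bottom P k) {1..k}"
  proof (rule linorder_inj_onI)
    fix x y assume "x < y" "y \<in> {1..k}"
    then show "witness_bottom P k x \<noteq> witness_bottom P k y"
      using witness_bottom_strict_decreasing[of x y k P] by simp
  qed auto
  show "witness_top k ` {1..k} \<inter> (\<lambda>i. witness_bottom P k i + 1) ` {1..k} = {}"
    using witness_top_ne_bottom by blast
qed

theorem mainTheorem3:
  fixes k :: nat and \<sigma> :: "nat \<Rightarrow> nat"
  assumes "\<sigma> permutes {1..k}"
    and "avoids_213 k \<sigma>"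
  shows "\<exists>a b :: nat \<Rightarrow> int. strongly_regular_bi_sequence k a b \<and> \<sigma> = sigma0 k a b"
proof (intro exI conjI)
  let ?a = "witness_top k" and ?b = "witness_bottom (inv \<sigma>) k"
  show "strongly_regular_bi_sequence k ?a ?b"
    using assms(1) by (intro strongly_regular_witness permutes_inv)
  have "Max {j \<in> {1..k}. j \<notin> inv \<sigma> ` {i + 1..k} \<and> ?a j \<le> ?b i + 1} = inv \<sigma> i"
    if "i \<in> {1..k}" for i
    using greedy_choice_avoiding_213[OF assms that] witness_top_le_bottom_iff[OF that] by simp
  then show "\<sigma> = sigma0 k ?a ?b"
    using sigma0_eq_greedy[OF assms(1)] by simp
qed

end
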